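(* Let $\mathcal{X},\mathcal{Y}$ be finite sets and $n\ge 1$. Let $\tilde{\Phi}_n=(\tilde{\varphi}_0,\tilde{\varphi}_2,\tilde{\psi})$ be a WAK code of blocklength $n$ with message sets $\tilde{\mathcal{M}}_0,\tilde{\mathcal{M}}_2$, and let $P_{\bar X\bar Y}\in\mathcal{P}_n(\mathcal{X}\times\mathcal{Y})$ be a joint type such that $$\log|\mathcal{T}^n_{\bar X}|\ge \log|\tilde{\mathcal{M}}_0|,$$ where $\mathcal{T}^n_{\bar X}$ is the type class of the marginal type $P_{\bar X}$. Then there exists a GW code $\Phi_n=(\varphi_0,\varphi_1,\varphi_2,\psi_1,\psi_2)$ of blocklength $n$ with message sets $\mathcal{M}_0,\mathcal{M}_1,\mathcal{M}_2$ such that \begin{align*} \log|\mathcal{M}_0| &\le \log|\tilde{\mathcal{M}}_0|+\log n+\log\log|\mathcal{X}|+2,\\ \log |\mathcal{M}_0||\mathcal{M}_1| &\le \log|\mathcal{T}^n_{\bar X}|+\log n+\log\log|\mathcal{X}|+2,\\ \log|\mathcal{M}_2| &= \log|\tilde{\mathcal{M}}_2|, \end{align*} and $$\mathrm{P}_{\mathtt{GW}}(\Phi_n\mid P_{\mathcal{T}^n_{\bar X\bar Y}})\le \mathrm{P}_{\mathtt{WAK}}(\tilde{\Phi}_n\mid P_{\mathcal{T}^n_{\bar X\bar Y}}).$$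
   Context: All logarithms are base 2. $\mathcal{P}_n(\mathcal{X}\times\mathcal{Y})$ is the set of joint types (empirical distributions) of sequences in $\mathcal{X}^n\times\mathcal{Y}^n$; for a joint type $P_{\bar X\bar Y}$, $\mathcal{T}^n_{\bar X\bar Y}$ is its type class (the set of pairs of sequences with that joint type) and $P_{\mathcal{T}^n_{\bar X\bar Y}}$ is the uniform distribution on $\mathcal{T}^n_{\bar X\bar Y}$. A WAK (Wyner–Ahlswede–Körner, source coding with a helper) code of blocklength $n$ is a triple $\tilde{\Phi}_n=(\tilde{\varphi}_0,\tilde{\varphi}_2,\tilde{\psi})$ of maps $\tilde{\varphi}_0:\mathcal{X}^n\to\tilde{\mathcal{M}}_0$, $\tilde{\varphi}_2:\mathcal{Y}^n\to\tilde{\mathcal{M}}_2$, $\tilde{\psi}:\tilde{\mathcal{M}}_0\times\tilde{\mathcal{M}}_2\to\mathcal{Y}^n$, with finite sets $\tilde{\mathcal{M}}_0,\tilde{\mathcal{M}}_2$. For $(X^n,Y^n)\sim P$, $\mathrm{P}_{\mathtt{WAK}}(\tilde{\Phi}_n\mid P)$ is the probability that $\tilde{\psi}(\tilde{\varphi}_0(X^n),\tilde{\varphi}_2(Y^n))\ne Y^n$. A GW (Gray–Wyner) code of blocklength $n$ is a tuple $\Phi_n=(\varphi_0,\varphi_1,\varphi_2,\psi_1,\psi_2)$ of maps $\varphi_i:\mathcal{X}^n\times\mathcal{Y}^n\to\mathcal{M}_i$ ($i=0,1,2$, finite sets $\mathcal{M}_i$), $\psi_1:\mathcal{M}_0\times\mathcal{M}_1\to\mathcal{X}^n$,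 $\psi_2:\mathcal{M}_0\times\mathcal{M}_2\to\mathcal{Y}^n$. For $(X^n,Y^n)\sim P$, $\mathrm{P}_{\mathtt{GW}}(\Phi_n\mid P)$ is the probability that $\big(\psi_1(\varphi_0(X^n,Y^n),\varphi_1(X^n,Y^n)),\psi_2(\varphi_0(X^n,Y^n),\varphi_2(X^n,Y^n))\big)\ne (X^n,Y^n)$. *)

theory Defs
  imports "HOL-Probability.Probability_Mass_Function"
begin

definition seq_type :: "'a list \<Rightarrow> ('a \<Rightarrow> real)" where
  "seq_type xs = (\<lambda>a. real (card {i. i < length xs \<and> xs ! i = a}) / real (length xs))"

definition joint_type :: "'a list \<Rightarrow> 'b list \<Rightarrow> ('a \<times> 'b \<Rightarrow> real)" where
  "joint_type xs ys = (\<lambda>ab. real (card {i. i < length xs \<and> (xs ! i, ys ! i) = ab}) / real (length xs))"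

definition joint_types :: "nat \<Rightarrow> ('a \<times> 'b \<Rightarrow> real) set" where
  "joint_types n = {joint_type xs ys | xs ys. length xs = n \<and> length ys = n}"

definition joint_type_class :: "nat \<Rightarrow> ('a \<times> 'b \<Rightarrow> real) \<Rightarrow> ('a list \<times> 'b list) set" where
  "joint_type_class n P = {(xs, ys). length xs = n \<and> length ys = n \<and> joint_type xs ys = P}"

definition seq_type_class :: "nat \<Rightarrow> ('a \<Rightarrow> real) \<Rightarrow> 'a list set" where
  "seq_type_class n Q = {xs. length xs = n \<and> seq_type xs = Q}"

definition marginal_x :: "('a::finite \<times> 'b::finite \<Rightarrow> real) \<Rightarrow> ('a \<Rightarrow> real)" where
  "marginal_x P = (\<lambda>a. \<Sum>b\<in>UNIV. P (a, b))"

definition wak_code :: "nat \<Rightarrow> 'm0 set \<Rightarrow> 'm2 set \<Rightarrow> ('a list \<Rightarrow> 'm0) \<Rightarrow> ('b list \<Rightarrow> 'm2)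
    \<Rightarrow> ('m0 \<Rightarrow> 'm2 \<Rightarrow> 'b list) \<Rightarrow> bool" where
  "wak_code n M0 M2 f0 f2 g \<longleftrightarrow> finite M0 \<and> finite M2 \<and>
     (\<forall>xs. length xs = n \<longrightarrow> f0 xs \<in> M0) \<and>
     (\<forall>ys. length ys = n \<longrightarrow> f2 ys \<in> M2) \<and>
     (\<forall>m0\<in>M0. \<forall>m2\<in>M2. length (g m0 m2) = n)"

definition wak_error :: "('a list \<Rightarrow> 'm0) \<Rightarrow> ('b list \<Rightarrow> 'm2) \<Rightarrow> ('m0 \<Rightarrow> 'm2 \<Rightarrow> 'b list)
    \<Rightarrow> ('a list \<times> 'b list) pmf \<Rightarrow> real" where
  "wak_error f0 f2 g p = measure_pmf.prob p {(xs, ys). g (f0 xs) (f2 ys) \<noteq> ys}"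

definition gw_code :: "nat \<Rightarrow> 'm0 set \<Rightarrow> 'm1 set \<Rightarrow> 'm2 set
    \<Rightarrow> ('a list \<Rightarrow> 'b list \<Rightarrow> 'm0) \<Rightarrow> ('a list \<Rightarrow> 'b list \<Rightarrow> 'm1) \<Rightarrow> ('a list \<Rightarrow> 'b list \<Rightarrow> 'm2)
    \<Rightarrow> ('m0 \<Rightarrow> 'm1 \<Rightarrow> 'a list) \<Rightarrow> ('m0 \<Rightarrow> 'm2 \<Rightarrow> 'b list) \<Rightarrow> bool" where
  "gw_code n M0 M1 M2 f0 f1 f2 g1 g2 \<longleftrightarrow> finite M0 \<and> finite M1 \<and> finite M2 \<and>
     (\<forall>xs ys. length xs = n \<and> length ys = n \<longrightarrow>
        f0 xs ys \<in> M0 \<and> f1 xs ys \<in> M1 \<and> f2 xs ys \<in> M2) \<and>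
     (\<forall>m0\<in>M0. \<forall>m1\<in>M1. length (g1 m0 m1) = n) \<and>
     (\<forall>m0\<in>M0. \<forall>m2\<in>M2. length (g2 m0 m2) = n)"

definition gw_error :: "('a list \<Rightarrow> 'b list \<Rightarrow> 'm0) \<Rightarrow> ('a list \<Rightarrow> 'b list \<Rightarrow> 'm1) \<Rightarrow> ('a list \<Rightarrow> 'b list \<Rightarrow> 'm2)
    \<Rightarrow> ('m0 \<Rightarrow> 'm1 \<Rightarrow> 'a list) \<Rightarrow> ('m0 \<Rightarrow> 'm2 \<Rightarrow> 'b list) \<Rightarrow> ('a list \<times> 'b list) pmf \<Rightarrow> real" where
  "gw_error f0 f1 f2 g1 g2 p = measure_pmf.prob p
     {(xs, ys). (g1 (f0 xs ys) (f1 xs ys), g2 (f0 xs ys) (f2 xs ys)) \<noteq> (xs, ys)}"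

end

theory Submission
  imports Defs
begin

text \<open>
  Split the type class \<open>T\<close> of \<open>x\<close> into the fibres of the WAK encoder \<open>\<phi>\<^sub>0\<close>, number the
  elements of each fibre, and cut the numbering into blocks of length
  \<open>K = \<lceil>|T| / |M\<^sub>0|\<rceil>\<close>. The common GW message is the fibre label with the block number, the
  private message for \<open>x\<close> is the position inside the block, and the private message for \<open>y\<close>
  is the WAK helper message. The common message thus determines \<open>\<phi>\<^sub>0(x)\<close>, so \<open>y\<close> is
  recovered whenever the WAK decoder succeeds, and \<open>x\<close> is always recovered on \<open>T\<close>.
  Since \<open>|M\<^sub>0| \<le> |T|\<close>, the fibres need at most \<open>2|M\<^sub>0|\<close> blocks in total, and
  \<open>2|M\<^sub>0| K \<le> 4|T|\<close>; the slack terms \<open>log n + log log |X|\<close> are nonnegative.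
\<close>

lemma marginal_x_joint_type:
  fixes xs :: "'x::finite list" and ys :: "'y::finite list"
  shows "marginal_x (joint_type xs ys) = seq_type xs"
proof
  fix a
  have "card {i. i < length xs \<and> xs ! i = a}
      = card (\<Union>b. {i. i < length xs \<and> (xs ! i, ys ! i) = (a, b)})"
    by (rule arg_cong[where f = card]) auto
  also have "\<dots> = (\<Sum>b\<in>UNIV. card {i. i < length xs \<and> (xs ! i, ys ! i) = (a, b)})"
    by (rule card_UN_disjoint) auto
  finally have "card {i. i < length xs \<and> xs ! i = a}
      = (\<Sum>b\<in>UNIV. card {i. i < length xs \<and> (xs ! i, ys ! i) = (a, b)})" .
  then show "marginal_x (joint_type xs ys) a = seq_type xs a"
    unfolding marginal_x_def joint_type_def seq_type_def
    by (simp add: of_nat_sum sum_divide_distrib)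
qed

lemma joint_type_class_subset:
  fixes P :: "'x::finite \<times> 'y::finite \<Rightarrow> real"
  shows "joint_type_class n P \<subseteq> seq_type_class n (marginal_x P) \<times> {ys. length ys = n}"
  by (auto simp: joint_type_class_def seq_type_class_def marginal_x_joint_type)

lemma finite_seq_type_class: "finite (seq_type_class n (Q :: 'x::finite \<Rightarrow> real))"
  by (rule finite_subset[OF _ finite_lists_length_eq[of "UNIV :: 'x set" n]])
    (auto simp: seq_type_class_def)

lemma finite_joint_type_class:
  "finite (joint_type_class n (P :: 'x::finite \<times> 'y::finite \<Rightarrow> real))"
  by (rule finite_subset[OF joint_type_class_subset])
    (auto intro: finite_seq_type_class finite_lists_length_eq[of "UNIV :: 'y set" n, simplified])

lemma set_pmf_uniform_joint_type_class:
  fixes P :: "'x::finite \<times> 'y::finite \<Rightarrow> real"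
  assumes "P \<in> joint_types n"
  shows "set_pmf (pmf_of_set (joint_type_class n P)) \<subseteq> seq_type_class n (marginal_x P) \<times> {ys. length ys = n}"
proof -
  have "joint_type_class n P \<noteq> {}"
    using assms by (auto simp: joint_types_def joint_type_class_def)
  then show ?thesis
    by (simp add: finite_joint_type_class joint_type_class_subset)
qed

lemma div_less_ceiling_div:
  fixes i a K :: nat
  assumes "i < a" "0 < K"
  shows "i div K < (a + K - 1) div K"
proof -
  have "a + K - 1 < (a + K - 1) div K * K + K"
  proof -
    have "(a + K - 1) mod K < K"
      using assms(2) by simp
    then show ?thesis
      by (metis div_mult_mod_eq add_less_mono1 add_less_cancel_left)
  qed
  then have "i < (a + K - 1) div K * K"
    using assms by linarith
  then show ?thesis
    using assms(2) by (simp add: div_less_iff_less_mult)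
qed

lemma sum_ceiling_div_le:
  fixes a :: "'m \<Rightarrow> nat"
  assumes "finite M" "0 < K" "(\<Sum>m\<in>M. a m) \<le> card M * K"
  shows "(\<Sum>m\<in>M. (a m + K - 1) div K) \<le> 2 * card M"
proof -
  have "K * (\<Sum>m\<in>M. (a m + K - 1) div K) = (\<Sum>m\<in>M. K * ((a m + K - 1) div K))"
    by (simp add: sum_distrib_left)
  also have "\<dots> \<le> (\<Sum>m\<in>M. a m + K)"
  proof (rule sum_mono)
    fix m
    have "K * ((a m + K - 1) div K) \<le> a m + K - 1"
      by simp
    then show "K * ((a m + K - 1) div K) \<le> a m + K"
      by linarith
  qed
  also have "\<dots> \<le> K * (2 * card M)"
    using assms(3) by (simp add: sum.distrib mult.commute)
  finally show ?thesis
    using assms(2) by simp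
qed

lemma ceiling_div_mult_bounds:
  fixes q t :: nat
  assumes "0 < q" "q \<le> t"
  shows "t \<le> q * ((t + q - 1) div q)" "q * ((t + q - 1) div q) \<le> 2 * t"
proof -
  have "t + q - 1 = q * ((t + q - 1) div q) + (t + q - 1) mod q"
    by simp
  moreover have "(t + q - 1) mod q < q"
    using assms(1) by simp
  ultimately show "t \<le> q * ((t + q - 1) div q)"
    by linarith
  have "q * ((t + q - 1) div q) \<le> t + q - 1"
    by simp
  then show "q * ((t + q - 1) div q) \<le> 2 * t"
    using assms(2) by linarith
qed

lemma fibre_numbering:
  fixes f :: "'a \<Rightarrow> 'm"
  assumes "finite T"
  obtains idx :: "'a \<Rightarrow> nat"
  where "inj_on (\<lambda>x. (f x, idx x)) T" "\<And>x. x \<in> T \<Longrightarrow> idx x < card {y \<in> T. f y = f x}"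
proof -
  define A where "A m = {x \<in> T. f x = m}" for m
  have "finite (A m)" for m
    using assms unfolding A_def by simp
  then have "\<forall>m. \<exists>h. bij_betw h (A m) {0..<card (A m)}"
    using ex_bij_betw_finite_nat by blast
  then obtain ix where ix: "\<And>m. bij_betw (ix m) (A m) {0..<card (A m)}"
    by metis
  show ?thesis
  proof
    show "inj_on (\<lambda>x. (f x, ix (f x) x)) T"
    proof (rule inj_onI)
      fix x y assume "x \<in> T" "y \<in> T" "(f x, ix (f x) x) = (f y, ix (f y) y)"
      then have "x \<in> A (f x)" "y \<in> A (f x)" "ix (f x) x = ix (f x) y"
        unfolding A_def by auto
      then show "x = y"
        using inj_onD[OF bij_betw_imp_inj_on[OF ix]] by blast
    qed
    show "ix (f x) x < card {y \<in> T. f y = f x}" if "x \<in> T" for x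
      using bij_betw_apply[OF ix, of x "f x"] that unfolding A_def by simp
  qed
qed

lemma card_block_labels_le:
  fixes f :: "'a \<Rightarrow> 'm" and idx :: "'a \<Rightarrow> nat"
  assumes "finite T" "finite M" "f ` T \<subseteq> M" "0 < K" "card T \<le> card M * K"
    and idx: "\<And>x. x \<in> T \<Longrightarrow> idx x < card {y \<in> T. f y = f x}"
  shows "card ((\<lambda>x. (f x, idx x div K)) ` T) \<le> 2 * card M"
proof -
  define A where "A m = {x \<in> T. f x = m}" for m
  have "(\<lambda>x. (f x, idx x div K)) ` T \<subseteq> (SIGMA m:M. {..<(card (A m) + K - 1) div K})"
  proof (rule image_subsetI)
    fix x assume "x \<in> T"
    then show "(f x, idx x div K) \<in> (SIGMA m:M. {..<(card (A m) + K - 1) div K})"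
      using assms(3) div_less_ceiling_div[OF idx \<open>0 < K\<close>] unfolding A_def by auto
  qed
  then have "card ((\<lambda>x. (f x, idx x div K)) ` T) \<le> card (SIGMA m:M. {..<(card (A m) + K - 1) div K})"
    by (rule card_mono[rotated]) (simp add: assms(2))
  also have "\<dots> = (\<Sum>m\<in>M. (card (A m) + K - 1) div K)"
    using assms(2) by simp
  also have "\<dots> \<le> 2 * card M"
  proof (rule sum_ceiling_div_le[OF assms(2,4)])
    have "T = (\<Union>m\<in>M. A m)"
      using assms(3) unfolding A_def by auto
    then have "card T = (\<Sum>m\<in>M. card (A m))"
      using assms(1,2) by (simp only:) (rule card_UN_disjoint, auto simp: A_def)
    then show "(\<Sum>m\<in>M. card (A m)) \<le> card M * K"
      using assms(5) by simp
  qed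
  finally show ?thesis .
qed

lemma fibre_block_encoding:
  fixes f :: "'a \<Rightarrow> 'm"
  assumes "finite T" "T \<noteq> {}" "finite M" "f ` T \<subseteq> M" "card M \<le> card T"
  obtains S :: "('m \<times> nat) set" and K :: nat and enc :: "'a \<Rightarrow> ('m \<times> nat) \<times> nat"
  where "finite S" "fst ` S \<subseteq> M" "card S \<le> 2 * card M" "card S * K \<le> 4 * card T"
    "inj_on enc T" "enc ` T \<subseteq> S \<times> {..<K}" "\<And>x. x \<in> T \<Longrightarrow> fst (fst (enc x)) = f x"
proof -
  have "0 < card M"
    using assms(2-4) by (metis card_gt_0_iff empty_is_image subset_empty)
  define K where "K = (card T + card M - 1) div card M"
  have K: "card T \<le> card M * K" "card M * K \<le> 2 * card T"
    using ceiling_div_mult_bounds[OF \<open>0 < card M\<close> assms(5)] unfolding K_def by simp_all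
  then have "0 < K"
    using assms(1,2) by (metis card_gt_0_iff gr0I le_zero_eq mult_0_right)
  obtain idx where idx: "inj_on (\<lambda>x. (f x, idx x)) T" "\<And>x. x \<in> T \<Longrightarrow> idx x < card {y \<in> T. f y = f x}"
    using fibre_numbering[OF assms(1)] by blast
  define S where "S = (\<lambda>x. (f x, idx x div K)) ` T"
  define enc where "enc x = ((f x, idx x div K), idx x mod K)" for x
  have "card S \<le> 2 * card M"
    unfolding S_def using card_block_labels_le[OF assms(1,3,4) \<open>0 < K\<close> K(1) idx(2)] .
  moreover have "card S * K \<le> 4 * card T"
  proof -
    have "card S * K \<le> 2 * card M * K"
      using \<open>card S \<le> 2 * card M\<close> by simp
    then show ?thesis
      using K(2) by linarith
  qed
  moreover have "inj_on enc T"
  proof (rule inj_onI)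
    fix x y assume "x \<in> T" "y \<in> T" "enc x = enc y"
    then have "f x = f y" "idx x div K = idx y div K" "idx x mod K = idx y mod K"
      unfolding enc_def by auto
    then have "(f x, idx x) = (f y, idx y)"
      by (metis div_mult_mod_eq)
    with \<open>x \<in> T\<close> \<open>y \<in> T\<close> show "x = y"
      using idx(1) by (auto dest: inj_onD)
  qed
  moreover have "finite S" "fst ` S \<subseteq> M" "enc ` T \<subseteq> S \<times> {..<K}"
    using assms(1,4) \<open>0 < K\<close> unfolding S_def enc_def by auto
  ultimately show ?thesis
    using that unfolding enc_def by simp
qed

lemma inj_on_left_inverse_into:
  assumes "inj_on e T" "T \<noteq> {}"
  obtains d where "\<And>x. x \<in> T \<Longrightarrow> d (e x) = x" "range d \<subseteq> T"
proof
  define d where "d y = (if y \<in> e ` T then inv_into T e y else (SOME x. x \<in> T))" for y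
  show "d (e x) = x" if "x \<in> T" for x
    using that assms(1) unfolding d_def by simp
  have "(SOME x. x \<in> T) \<in> T"
    using assms(2) by (simp add: some_in_eq)
  then show "range d \<subseteq> T"
    unfolding d_def by (auto intro: inv_into_into)
qed

lemma finite_nat_coding:
  assumes "finite N"
  obtains e :: "'a \<Rightarrow> nat" and d where "e ` N \<subseteq> {0..<card N}" "d ` {0..<card N} \<subseteq> N"
    "\<And>x. x \<in> N \<Longrightarrow> d (e x) = x"
proof -
  obtain e where e: "bij_betw e N {0..<card N}"
    using ex_bij_betw_finite_nat[OF assms] by blast
  show ?thesis
  proof
    show "e ` N \<subseteq> {0..<card N}" "inv_into N e ` {0..<card N} \<subseteq> N"
      using e bij_betw_inv_into[OF e] by (simp_all add: bij_betw_def)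
    show "inv_into N e (e x) = x" if "x \<in> N" for x
      using bij_betw_imp_inj_on[OF e] that by simp
  qed
qed

lemma gw_code_relabel_nat:
  assumes "gw_code n N0 N1 N2 h0 h1 h2 d1 d2"
  obtains N0' N1' N2' :: "nat set" and h0' h1' h2' d1' d2'
  where "gw_code n N0' N1' N2' h0' h1' h2' d1' d2'"
    "card N0' = card N0" "card N1' = card N1" "card N2' = card N2"
    "\<And>xs ys. length xs = n \<Longrightarrow> length ys = n \<Longrightarrow>
       d1' (h0' xs ys) (h1' xs ys) = d1 (h0 xs ys) (h1 xs ys) \<and>
       d2' (h0' xs ys) (h2' xs ys) = d2 (h0 xs ys) (h2 xs ys)"
proof -
  have "finite N0" "finite N1" "finite N2"
    using assms unfolding gw_code_def by auto
  then obtain e0 c0 e1 c1 e2 c2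
    where e0: "e0 ` N0 \<subseteq> {0..<card N0}" "c0 ` {0..<card N0} \<subseteq> N0" "\<And>x. x \<in> N0 \<Longrightarrow> c0 (e0 x) = x"
      and e1: "e1 ` N1 \<subseteq> {0..<card N1}" "c1 ` {0..<card N1} \<subseteq> N1" "\<And>x. x \<in> N1 \<Longrightarrow> c1 (e1 x) = x"
      and e2: "e2 ` N2 \<subseteq> {0..<card N2}" "c2 ` {0..<card N2} \<subseteq> N2" "\<And>x. x \<in> N2 \<Longrightarrow> c2 (e2 x) = x"
    by (metis finite_nat_coding)
  show ?thesis
  proof
    show "gw_code n {0..<card N0} {0..<card N1} {0..<card N2}
        (\<lambda>xs ys. e0 (h0 xs ys)) (\<lambda>xs ys. e1 (h1 xs ys)) (\<lambda>xs ys. e2 (h2 xs ys))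
        (\<lambda>k j. d1 (c0 k) (c1 j)) (\<lambda>k l. d2 (c0 k) (c2 l))"
      using assms e0(1,2) e1(1,2) e2(1,2) unfolding gw_code_def by (simp add: image_subset_iff)
    show "d1 (c0 (e0 (h0 xs ys))) (c1 (e1 (h1 xs ys))) = d1 (h0 xs ys) (h1 xs ys) \<and>
        d2 (c0 (e0 (h0 xs ys))) (c2 (e2 (h2 xs ys))) = d2 (h0 xs ys) (h2 xs ys)"
      if "length xs = n" "length ys = n" for xs ys
      using assms that e0(3) e1(3) e2(3) unfolding gw_code_def by simp
  qed simp_all
qed

lemma gw_error_le_wak_error:
  assumes "\<And>xs ys. (xs, ys) \<in> set_pmf p \<Longrightarrow>
    d1 (h0 xs ys) (h1 xs ys) = xs \<and> d2 (h0 xs ys) (h2 xs ys) = g (f0 xs) (f2 ys)"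
  shows "gw_error h0 h1 h2 d1 d2 p \<le> wak_error f0 f2 g p"
  unfolding gw_error_def wak_error_def
  using assms by (intro measure_pmf.finite_measure_mono_AE) (auto simp: AE_measure_pmf_iff)

lemma gw_code_from_wak_code:
  fixes f0 :: "'x list \<Rightarrow> 'm0" and f2 :: "'y list \<Rightarrow> 'm2"
  assumes wak: "wak_code n M0 M2 f0 f2 g"
    and T: "finite T" "T \<noteq> {}" "T \<subseteq> {xs. length xs = n}" "card M0 \<le> card T"
  obtains N0 :: "('m0 \<times> nat) set" and N1 :: "nat set" and h0 h1 h2 d1 d2
  where "gw_code n N0 N1 M2 h0 h1 h2 d1 d2"
    "card N0 \<le> 2 * card M0" "card N0 * card N1 \<le> 4 * card T"
    "\<And>xs ys. xs \<in> T \<Longrightarrow> d1 (h0 xs ys) (h1 xs ys) = xs \<and> d2 (h0 xs ys) (h2 xs ys) = g (f0 xs) (f2 ys)"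
proof -
  have "finite M0" "f0 ` T \<subseteq> M0"
    using wak T(3) unfolding wak_code_def by auto
  then obtain S :: "('m0 \<times> nat) set" and K and enc :: "'x list \<Rightarrow> ('m0 \<times> nat) \<times> nat"
    where S: "finite S" "fst ` S \<subseteq> M0" "card S \<le> 2 * card M0" "card S * K \<le> 4 * card T"
      and enc: "inj_on enc T" "enc ` T \<subseteq> S \<times> {..<K}" "\<And>xs. xs \<in> T \<Longrightarrow> fst (fst (enc xs)) = f0 xs"
    by (rule fibre_block_encoding[OF T(1,2) _ _ T(4)]) blast
  obtain dec where dec: "\<And>xs. xs \<in> T \<Longrightarrow> dec (enc xs) = xs" "range dec \<subseteq> T"
    using inj_on_left_inverse_into[OF enc(1) T(2)] by metis
  obtain x0 where "x0 \<in> T"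
    using T(2) by blast
  define enc' where "enc' xs = enc (if xs \<in> T then xs else x0)" for xs
  have enc': "enc' xs \<in> S \<times> {..<K}" for xs
    using enc(2) \<open>x0 \<in> T\<close> unfolding enc'_def by auto
  let ?h0 = "\<lambda>xs ys. fst (enc' xs)" and ?h1 = "\<lambda>xs ys. snd (enc' xs)" and ?h2 = "\<lambda>xs ys. f2 ys"
  let ?d1 = "\<lambda>s j. dec (s, j)" and ?d2 = "\<lambda>s m2. g (fst s) m2"
  show ?thesis
  proof
    have "length (?d1 s j) = n" for s j
      using dec(2) T(3) by blast
    moreover have "length (?d2 s m2) = n" if "s \<in> S" "m2 \<in> M2" for s m2
      using wak S(2) that unfolding wak_code_def by auto
    ultimately show "gw_code n S {..<K} M2 ?h0 ?h1 ?h2 ?d1 ?d2"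
      using wak S(1) enc' unfolding wak_code_def gw_code_def by (auto simp: mem_Times_iff)
    show "card S \<le> 2 * card M0" "card S * card {..<K} \<le> 4 * card T"
      using S by simp_all
    show "?d1 (?h0 xs ys) (?h1 xs ys) = xs \<and> ?d2 (?h0 xs ys) (?h2 xs ys) = g (f0 xs) (f2 ys)"
      if "xs \<in> T" for xs ys
      using that dec(1) enc(3) unfolding enc'_def by simp
  qed
qed

lemma gw_code_dominating_wak_code:
  fixes f0 :: "'x list \<Rightarrow> 'm0" and f2 :: "'y list \<Rightarrow> 'm2"
  assumes wak: "wak_code n M0 M2 f0 f2 g"
    and T: "finite T" "T \<noteq> {}" "T \<subseteq> {xs. length xs = n}" "card M0 \<le> card T"
    and p: "set_pmf p \<subseteq> T \<times> {ys. length ys = n}"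
  obtains N0 N1 N2 :: "nat set" and h0 h1 h2 d1 d2
  where "gw_code n N0 N1 N2 h0 h1 h2 d1 d2"
    "card N0 \<le> 2 * card M0" "card N0 * card N1 \<le> 4 * card T" "card N2 = card M2"
    "gw_error h0 h1 h2 d1 d2 p \<le> wak_error f0 f2 g p"
proof -
  obtain N0 :: "('m0 \<times> nat) set" and N1 :: "nat set" and h0 h1 h2 d1 d2
    where code: "gw_code n N0 N1 M2 h0 h1 h2 d1 d2"
      and card: "card N0 \<le> 2 * card M0" "card N0 * card N1 \<le> 4 * card T"
      and decode: "\<And>xs ys. xs \<in> T \<Longrightarrow>
        d1 (h0 xs ys) (h1 xs ys) = xs \<and> d2 (h0 xs ys) (h2 xs ys) = g (f0 xs) (f2 ys)"
    by (rule gw_code_from_wak_code[OF wak T]) blast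
  obtain N0' N1' N2' :: "nat set" and h0' h1' h2' d1' d2'
    where code': "gw_code n N0' N1' N2' h0' h1' h2' d1' d2'"
      and card': "card N0' = card N0" "card N1' = card N1" "card N2' = card M2"
      and relabel: "\<And>xs ys. length xs = n \<Longrightarrow> length ys = n \<Longrightarrow>
         d1' (h0' xs ys) (h1' xs ys) = d1 (h0 xs ys) (h1 xs ys) \<and>
         d2' (h0' xs ys) (h2' xs ys) = d2 (h0 xs ys) (h2 xs ys)"
    by (rule gw_code_relabel_nat[OF code]) blast
  have "gw_error h0' h1' h2' d1' d2' p \<le> wak_error f0 f2 g p"
  proof (rule gw_error_le_wak_error)
    fix xs ys assume "(xs, ys) \<in> set_pmf p"
    then have "xs \<in> T" "length xs = n" "length ys = n"
      using p T(3) by auto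
    then show "d1' (h0' xs ys) (h1' xs ys) = xs \<and> d2' (h0' xs ys) (h2' xs ys) = g (f0 xs) (f2 ys)"
      using decode relabel by simp
  qed
  with code' card card' show ?thesis
    using that by simp
qed

lemma log2_le_add_of_le_pow2_mult:
  fixes a b :: nat
  assumes "1 \<le> a" "b \<le> 2 ^ k * a"
  shows "log 2 b \<le> log 2 a + k"
proof (cases "b = 0")
  case False
  have "real b \<le> 2 ^ k * real a"
    using assms(2) by (metis of_nat_le_iff of_nat_mult of_nat_power of_nat_numeral)
  then have "log 2 b \<le> log 2 (2 ^ k * a)"
    using False assms(1) by simp
  also have "\<dots> = log 2 a + k"
    using assms(1) by (simp add: log_mult log_nat_power)
  finally show ?thesis .
next
  case True
  have "0 \<le> log 2 a"
    using assms(1) by simp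
  with True show ?thesis
    by (simp add: log_def)
qed

lemma log2_log2_of_nat_nonneg: "0 \<le> log 2 (log 2 (real k))"
proof (cases "k \<le> 1")
  case True
  then show ?thesis
    by (cases k) (auto simp: log_def)
qed simp

theorem theorem1:
  fixes n :: nat
    and M0 :: "'m0 set" and M2 :: "'m2 set"
    and f0 :: "'x::finite list \<Rightarrow> 'm0" and f2 :: "'y::finite list \<Rightarrow> 'm2"
    and g :: "'m0 \<Rightarrow> 'm2 \<Rightarrow> 'y list"
    and P :: "'x \<times> 'y \<Rightarrow> real"
  assumes "n \<ge> 1"
    and "wak_code n M0 M2 f0 f2 g"
    and "P \<in> joint_types n"
    and "log 2 (card (seq_type_class n (marginal_x P))) \<ge> log 2 (card M0)"
  shows "\<exists>(N0 :: nat set) (N1 :: nat set) (N2 :: nat set) h0 h1 h2 d1 d2.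
     gw_code n N0 N1 N2 h0 h1 h2 d1 d2 \<and>
     log 2 (card N0) \<le> log 2 (card M0) + log 2 n + log 2 (log 2 (card (UNIV :: 'x set))) + 2 \<and>
     log 2 (card N0 * card N1) \<le> log 2 (card (seq_type_class n (marginal_x P))) + log 2 n
        + log 2 (log 2 (card (UNIV :: 'x set))) + 2 \<and>
     log 2 (card N2) = log 2 (card M2) \<and>
     gw_error h0 h1 h2 d1 d2 (pmf_of_set (joint_type_class n P))
       \<le> wak_error f0 f2 g (pmf_of_set (joint_type_class n P))"
proof -
  define T where "T = seq_type_class n (marginal_x P)"
  have support: "set_pmf (pmf_of_set (joint_type_class n P)) \<subseteq> T \<times> {ys. length ys = n}"
    unfolding T_def using set_pmf_uniform_joint_type_class[OF assms(3)] .
  then obtain xs0 where "xs0 \<in> T"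
    using set_pmf_not_empty by fastforce
  have T_len: "T \<subseteq> {xs. length xs = n}"
    unfolding T_def seq_type_class_def by auto
  have "finite T"
    unfolding T_def by (rule finite_seq_type_class)
  with T_len have "1 \<le> card M0" "1 \<le> card T" "T \<noteq> {}"
    using assms(2) \<open>xs0 \<in> T\<close> unfolding wak_code_def by (auto simp: Suc_le_eq card_gt_0_iff)
  with assms(4) have "card M0 \<le> card T"
    unfolding T_def by simp
  then obtain N0 N1 N2 :: "nat set" and h0 h1 h2 d1 d2
    where code: "gw_code n N0 N1 N2 h0 h1 h2 d1 d2"
      and card: "card N0 \<le> 2 * card M0" "card N0 * card N1 \<le> 4 * card T" "card N2 = card M2"
      and error: "gw_error h0 h1 h2 d1 d2 (pmf_of_set (joint_type_class n P))
        \<le> wak_error f0 f2 g (pmf_of_set (joint_type_class n P))"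
    by (rule gw_code_dominating_wak_code[OF assms(2) \<open>finite T\<close> \<open>T \<noteq> {}\<close> T_len _ support]) blast
  have "log 2 (card N0) \<le> log 2 (card M0) + 1"
    using log2_le_add_of_le_pow2_mult[OF \<open>1 \<le> card M0\<close>, of "card N0" 1] card(1) by simp
  moreover have "log 2 (card N0 * card N1) \<le> log 2 (card T) + 2"
    using log2_le_add_of_le_pow2_mult[OF \<open>1 \<le> card T\<close>, of "card N0 * card N1" 2] card(2)
    by (simp del: of_nat_mult)
  moreover have "0 \<le> log 2 n" "0 \<le> log 2 (log 2 (card (UNIV :: 'x set)))"
    using assms(1) log2_log2_of_nat_nonneg by simp_all
  ultimately show ?thesis
    using code card(3) error unfolding T_def
    by (intro exI[of _ N0] exI[of _ N1] exI[of _ N2] exI conjI) (simp_all del: of_nat_mult)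
qed

end
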